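(* Every quantum graph $G$ has a coloring of cardinality at most $\operatorname{slog}(|G|,(\|G\|+1)^2)$.
   Context: A quantum graph $G$ consists of a finite-dimensional complex inner product space $V(G)$ and a real vector space $E(G)$ of self-adjoint operators on $V(G)$ containing the identity $I$; write $|G|=\dim V(G)$ and $\|G\|=\dim E(G)-1$. A code of $G$ is a subspace $C\subseteq V(G)$ such that there is a function $\epsilon_C:E(G)\to\mathbb{R}$ with $P_CAP_C=\epsilon_C(A)P_C$ for all $A\in E(G)$, where $P_C$ is the orthogonal projection onto $C$. A coloring of $G$ is a set $K$ of codes of $G$ with $\sum_{C\in K}P_C=I$. The step logarithm is defined for positive integers $q$ and nonnegative integers $p$ by $\operatorname{slog}(0,q)=0$ and $\operatorname{slog}(p,q)=\operatorname{slog}(p-\lceil p/q\rceil,q)+1$ for $p\ge1$. *)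

theory Defs
  imports "HOL-Analysis.Analysis"
begin

text \<open>Step logarithm. slog(0,q)=0 and slog(p,q) = slog(p - ceil(p/q), q) + 1 for p \<ge> 1.
  The paper only uses positive q; for q = 0 (never needed for q \<ge> 1) we return 0.\<close>
function slog :: "nat \<Rightarrow> nat \<Rightarrow> nat" where
  "slog p q = (if p = 0 \<or> q = 0 then 0 else slog (p - nat \<lceil>real p / real q\<rceil>) q + 1)"
  by auto
termination
proof (relation "Wellfounded.measure fst")
  show "wf (Wellfounded.measure fst)" by simp
next
  fix p q :: nat assume h: "\<not> (p = 0 \<or> q = 0)"
  hence "real p / real q > 0" by simp
  hence "\<lceil>real p / real q\<rceil> \<ge> 1" by linarith
  thus "((p - nat \<lceil>real p / real q\<rceil>, q), p, q) \<in> Wellfounded.measure fst" using h by simp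
qed

text \<open>The space V(G) is modelled as complex^'n (standard inner product), operators on V(G)
  as complex matrices complex^'n^'n.\<close>

definition cinner_vec :: "complex^'n \<Rightarrow> complex^'n \<Rightarrow> complex" where
  "cinner_vec x y = (\<Sum>i\<in>UNIV. cnj (x $ i) * y $ i)"

definition adjoint_mat :: "complex^'n^'n \<Rightarrow> complex^'n^'n" where
  "adjoint_mat A = (\<chi> i j. cnj (A $ j $ i))"

definition self_adjoint :: "complex^'n^'n \<Rightarrow> bool" where
  "self_adjoint A \<longleftrightarrow> adjoint_mat A = A"

definition csubspace :: "(complex^'n) set \<Rightarrow> bool" where
  "csubspace C \<longleftrightarrow> 0 \<in> C \<and> (\<forall>x\<in>C. \<forall>y\<in>C. x + y \<in> C) \<and> (\<forall>c. \<forall>x\<in>C. c *s x \<in> C)"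

definition orth_proj :: "(complex^'n) set \<Rightarrow> complex^'n^'n" where
  "orth_proj C = (THE P. \<forall>v. P *v v \<in> C \<and> (\<forall>w\<in>C. cinner_vec w (v - P *v v) = 0))"

text \<open>A quantum graph with V(G) = complex^'n is given by E(G): a real vector space of
  self-adjoint operators containing the identity.\<close>
definition quantum_graph :: "(complex^'n^'n) set \<Rightarrow> bool" where
  "quantum_graph E \<longleftrightarrow> subspace E \<and> (\<forall>A\<in>E. self_adjoint A) \<and> mat 1 \<in> E"

definition qnorm :: "(complex^'n^'n) set \<Rightarrow> int" where
  "qnorm E = int (dim E) - 1"

definition is_code :: "(complex^'n^'n) set \<Rightarrow> (complex^'n) set \<Rightarrow> bool" where
  "is_code E C \<longleftrightarrow> csubspace C \<and>
     (\<exists>\<epsilon> :: complex^'n^'n \<Rightarrow> real. \<forall>A\<in>E. orth_proj C ** A ** orth_proj C = \<epsilon> A *\<^sub>R orth_proj C)"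

definition is_coloring :: "(complex^'n^'n) set \<Rightarrow> (complex^'n) set set \<Rightarrow> bool" where
  "is_coloring E K \<longleftrightarrow> finite K \<and> (\<forall>C\<in>K. is_code E C) \<and> (\<Sum>C\<in>K. orth_proj C) = mat 1"

end

theory Submission
  imports Defs
begin

lemma convex_hull_0_ex_nonpos_inner:
  fixes X :: "'a::euclidean_space set"
  assumes "finite X" "0 \<in> convex hull X"
  shows "\<exists>x\<in>X. x \<bullet> z \<le> 0"
proof (rule ccontr)
  assume "\<not> ?thesis"
  then have pos: "\<forall>x\<in>X. x \<bullet> z > 0" by auto
  obtain u where u: "\<forall>x\<in>X. 0 \<le> u x" "sum u X = 1" "(\<Sum>x\<in>X. u x *\<^sub>R x) = 0"
    using assms convex_hull_finite[of X] by auto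
  obtain x0 where x0: "x0 \<in> X" "u x0 > 0"
    using u(1,2) by (metis less_eq_real_def sum_nonpos zero_less_one not_less)
  have "0 < u x0 * (x0 \<bullet> z)" using x0 pos by auto
  also have "\<dots> \<le> (\<Sum>x\<in>X. u x * (x \<bullet> z))"
    by (rule member_le_sum) (use x0 u pos assms in \<open>auto intro: less_imp_le\<close>)
  also have "\<dots> = (\<Sum>x\<in>X. u x *\<^sub>R x) \<bullet> z" by (simp add: inner_sum_left)
  finally show False using u(3) by simp
qed

lemma convex_hull_supporting_face:
  fixes Y :: "'a::euclidean_space set"
  assumes "finite Y" "z \<in> convex hull Y" "\<forall>y\<in>Y. z \<bullet> z \<le> y \<bullet> z"
  shows "z \<in> convex hull {y\<in>Y. z \<bullet> y = z \<bullet> z}"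
proof -
  let ?T = "{y\<in>Y. z \<bullet> y = z \<bullet> z}"
  obtain u where u: "\<forall>x\<in>Y. 0 \<le> u x" "sum u Y = 1" "(\<Sum>x\<in>Y. u x *\<^sub>R x) = z"
    using assms convex_hull_finite[of Y] by auto
  have "(\<Sum>y\<in>Y. u y * (y \<bullet> z - z \<bullet> z)) = (\<Sum>x\<in>Y. u x *\<^sub>R x) \<bullet> z - sum u Y * (z \<bullet> z)"
    by (simp add: inner_sum_left sum_subtractf sum_distrib_right algebra_simps)
  also have "\<dots> = 0" using u by simp
  finally have "\<forall>y\<in>Y. u y * (y \<bullet> z - z \<bullet> z) = 0"
    using sum_nonneg_eq_0_iff[OF assms(1), of "\<lambda>y. u y * (y \<bullet> z - z \<bullet> z)"] u(1) assms(3)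
    by auto
  then have off_face: "\<forall>y\<in>Y - ?T. u y = 0" by (auto simp: inner_commute)
  have "sum u ?T = 1"
    using u(2) sum.mono_neutral_right[OF assms(1), of ?T u] off_face by auto
  moreover have "(\<Sum>x\<in>?T. u x *\<^sub>R x) = z"
    using u(3) sum.mono_neutral_right[OF assms(1), of ?T "\<lambda>x. u x *\<^sub>R x"] off_face by auto
  ultimately
  show ?thesis
    using convex_hull_finite[of ?T] assms(1) u(1) by auto
qed

lemma closed_segment_ex_norm_less:
  fixes z x :: "'a::real_inner"
  assumes "z \<noteq> 0" "x \<bullet> z \<le> 0"
  shows "\<exists>y\<in>closed_segment z x. norm y < norm z"
proof -
  define a where "a = z \<bullet> z"
  define b where "b = (x - z) \<bullet> (x - z)"
  have a: "a > 0" and b: "b \<ge> 0" using assms(1) unfolding a_def b_def by simp_all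
  have c: "z \<bullet> (x - z) \<le> - a" using assms(2) unfolding a_def by (simp add: inner_diff_right inner_commute)
  define t where "t = a / (a + b)"
  have t: "0 < t" "t \<le> 1" using a b unfolding t_def by auto
  have "t * b = a * b / (a + b)" unfolding t_def by simp
  also have "\<dots> < a" using a b by (simp add: divide_less_eq field_simps)
  finally have tb: "t * b < a" .
  have "norm (z + t *\<^sub>R (x - z)) ^ 2 = a + 2 * t * (z \<bullet> (x - z)) + t * t * b"
    unfolding power2_norm_eq_inner a_def b_def
    by (simp add: inner_add_left inner_add_right inner_commute algebra_simps)
  also have "\<dots> \<le> a - t * (2 * a - t * b)"
    using mult_left_mono[OF c, of t] t by (simp add: algebra_simps)
  also have "\<dots> < a" using t tb a by simp
  finally have "norm (z + t *\<^sub>R (x - z)) ^ 2 < norm z ^ 2"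
    unfolding a_def by (simp add: power2_norm_eq_inner)
  then have "norm (z + t *\<^sub>R (x - z)) < norm z"
    using power_less_imp_less_base by fastforce
  moreover have "z + t *\<^sub>R (x - z) \<in> closed_segment z x"
    unfolding closed_segment_def using t by (intro CollectI exI[of _ t]) (simp add: algebra_simps)
  ultimately show ?thesis by blast
qed

lemma closest_point_convex_hull_small_support:
  fixes Y :: "'a::euclidean_space set"
  assumes S: "subspace S" "dim S \<le> M" and Y: "finite Y" "Y \<noteq> {}" "Y \<subseteq> S"
    and z: "z = closest_point (convex hull Y) 0" "z \<noteq> 0"
  obtains T where "T \<subseteq> Y" "card T \<le> M" "z \<in> convex hull T"
proof -
  have closed: "closed (convex hull Y)"
    using Y(1) by (simp add: compact_imp_closed finite_imp_compact_convex_hull)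
  have zY: "z \<in> convex hull Y" unfolding z(1) using Y(2) by (intro closest_point_in_set[OF closed]) simp
  have "z \<bullet> z \<le> y \<bullet> z" if "y \<in> Y" for y
  proof -
    have "(0 - z) \<bullet> (y - z) \<le> 0"
      unfolding z(1) using closest_point_dot[OF convex_convex_hull closed hull_inc[OF that]] .
    then show ?thesis by (simp add: inner_diff_right inner_commute)
  qed
  then have z_face: "z \<in> convex hull {y\<in>Y. z \<bullet> y = z \<bullet> z}"
    using convex_hull_supporting_face[OF Y(1) zY] by blast
  have "aff_dim {y\<in>Y. z \<bullet> y = z \<bullet> z} \<le> aff_dim (S \<inter> {v. z \<bullet> v = z \<bullet> z})"
    using Y(3) by (intro aff_dim_subset) blast
  also have "\<dots> \<le> int (dim S) - 1"
  proof -
    have "0 \<notin> {v. z \<bullet> v = z \<bullet> z}" using z(2) by simp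
    then have "\<not> S \<subseteq> {v. z \<bullet> v = z \<bullet> z}" using subspace_0[OF S(1)] by blast
    then show ?thesis
      using aff_dim_affine_Int_hyperplane[OF subspace_imp_affine[OF S(1)], of z "z \<bullet> z"]
        aff_dim_subspace[OF S(1)] by (simp split: if_splits)
  qed
  finally have face_dim: "aff_dim {y\<in>Y. z \<bullet> y = z \<bullet> z} + 1 \<le> int M" using S(2) by linarith
  obtain T where "T \<subseteq> {y\<in>Y. z \<bullet> y = z \<bullet> z}" "card T \<le> aff_dim {y\<in>Y. z \<bullet> y = z \<bullet> z} + 1"
    "z \<in> convex hull T"
    using z_face caratheodory_aff_dim by blast
  moreover from this(2) face_dim have "card T \<le> M" by linarith
  ultimately show ?thesis using that by blast
qed

lemma colorful_caratheodory_improve: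
  fixes X :: "nat \<Rightarrow> 'a::euclidean_space set"
  assumes S: "subspace S" "dim S \<le> M"
    and X: "\<And>i. i \<le> M \<Longrightarrow> finite (X i) \<and> X i \<subseteq> S \<and> 0 \<in> convex hull (X i)"
    and f: "f \<in> PiE {..M} X" and f0: "0 \<notin> convex hull (f ` {..M})"
  shows "\<exists>g\<in>PiE {..M} X. norm (closest_point (convex hull (g ` {..M})) 0)
                          < norm (closest_point (convex hull (f ` {..M})) 0)"
proof -
  define z where "z = closest_point (convex hull (f ` {..M})) 0"
  have closed_hull: "closed (convex hull (h ` {..M}))" for h :: "nat \<Rightarrow> 'a"
    by (simp add: compact_imp_closed finite_imp_compact_convex_hull)
  have z0: "z \<noteq> 0"
    using closest_point_in_set[OF closed_hull, of f 0] f0 unfolding z_def by auto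
  have "f ` {..M} \<subseteq> S" using X PiE_mem[OF f] by blast
  then obtain T where T: "T \<subseteq> f ` {..M}" "card T \<le> M" "z \<in> convex hull T"
    using closest_point_convex_hull_small_support[OF S _ _ _ z_def z0] by blast
  \<comment> \<open>T misses some colour i; swapping in a point x of X i with x \<bullet> z \<le> 0 lets the hull
    reach points of the segment from z to x, which are closer to 0 than z.\<close>
  obtain I where I: "I \<subseteq> {..M}" "inj_on f I" "T = f ` I"
    using T(1) subset_image_inj[of T f "{..M}"] by blast
  have "card I \<le> M" using T(2) I by (simp add: card_image)
  moreover have "finite I" using I(1) finite_subset by blast
  ultimately have "\<not> {..M} \<subseteq> I" using card_mono[of I "{..M}"] by auto
  then obtain i where i: "i \<le> M" "i \<notin> I" by auto
  obtain x where x: "x \<in> X i" "x \<bullet> z \<le> 0"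
    using convex_hull_0_ex_nonpos_inner X[OF i(1)] by blast
  define g where "g = f(i := x)"
  have g: "g \<in> PiE {..M} X" using f x i unfolding g_def by (auto simp: PiE_def extensional_def)
  have "T \<subseteq> g ` {..M}" using I i unfolding g_def by auto
  then have "z \<in> convex hull (g ` {..M})" using T(3) hull_mono by blast
  moreover have "x \<in> convex hull (g ` {..M})" using i hull_subset unfolding g_def by fastforce
  ultimately have "closed_segment z x \<subseteq> convex hull (g ` {..M})"
    by (simp add: closed_segment_subset)
  moreover obtain y where "y \<in> closed_segment z x" "norm y < norm z"
    using closed_segment_ex_norm_less[OF z0 x(2)] by blast
  ultimately have "norm (closest_point (convex hull (g ` {..M})) 0) < norm z"
    using closest_point_le[OF closed_hull, of y g 0] by (auto simp: dist_norm)
  then show ?thesis using g unfolding z_def by blast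
qed

lemma colorful_caratheodory:
  fixes X :: "nat \<Rightarrow> 'a::euclidean_space set"
  assumes S: "subspace S" "dim S \<le> M"
    and X: "\<And>i. i \<le> M \<Longrightarrow> finite (X i) \<and> X i \<subseteq> S \<and> 0 \<in> convex hull (X i)"
  shows "\<exists>f\<in>PiE {..M} X. 0 \<in> convex hull (f ` {..M})"
proof -
  let ?F = "PiE {..M} X"
  let ?D = "\<lambda>f. norm (closest_point (convex hull (f ` {..M})) 0)"
  have "finite ?F" using X by (intro finite_PiE) auto
  moreover have "X i \<noteq> {}" if "i \<le> M" for i using X[OF that] by auto
  then have "?F \<noteq> {}" by (simp add: PiE_eq_empty_iff)
  ultimately obtain f where f: "f \<in> ?F" and f_min: "\<not> (\<exists>g\<in>?F. ?D g < ?D f)"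
    using arg_min_if_finite[of ?F ?D] by blast
  show ?thesis
  proof (rule ccontr)
    assume "\<not> ?thesis"
    then have "0 \<notin> convex hull (f ` {..M})" using f by blast
    with f_min show False using colorful_caratheodory_improve[OF S X f] by blast
  qed
qed

lemma convex_hull_image_weights:
  fixes f :: "'i \<Rightarrow> 'a::real_vector"
  assumes "finite I" "y \<in> convex hull (f ` I)"
  obtains w where "\<forall>i\<in>I. 0 \<le> w i" "sum w I = 1" "(\<Sum>i\<in>I. w i *\<^sub>R f i) = y"
proof -
  obtain u where u: "\<forall>x\<in>f ` I. 0 \<le> u x" "sum u (f ` I) = 1" "(\<Sum>x\<in>f ` I. u x *\<^sub>R x) = y"
    using assms convex_hull_finite[of "f ` I"] by auto
  \<comment> \<open>split the weight of each point evenly among its preimages\<close>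
  define w where "w i = u (f i) / card {j\<in>I. f j = f i}" for i
  have fibre: "(\<Sum>i\<in>{j\<in>I. f j = x}. w i *\<^sub>R g x) = u x *\<^sub>R g x" if "x \<in> f ` I" for x and g :: "'a \<Rightarrow> 'b::real_vector"
  proof -
    have "{j\<in>I. f j = x} \<noteq> {}" "finite {j\<in>I. f j = x}" using that assms(1) by auto
    then show ?thesis unfolding w_def by (simp add: scaleR_sum_left[symmetric])
  qed
  have "sum w I = (\<Sum>x\<in>f ` I. \<Sum>i\<in>{j\<in>I. f j = x}. w i)"
    by (rule sum.image_gen[OF assms(1)])
  also have "\<dots> = sum u (f ` I)" using fibre[of _ "\<lambda>_. 1::real"] by (intro sum.cong refl) simp
  finally have "sum w I = 1" using u(2) by simp
  have "(\<Sum>i\<in>I. w i *\<^sub>R f i) = (\<Sum>x\<in>f ` I. \<Sum>i\<in>{j\<in>I. f j = x}. w i *\<^sub>R x)"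
    by (subst sum.image_gen[OF assms(1), of _ f]) (auto intro!: sum.cong)
  also have "\<dots> = (\<Sum>x\<in>f ` I. u x *\<^sub>R x)" using fibre[of _ id] by (intro sum.cong refl) simp
  finally have "(\<Sum>i\<in>I. w i *\<^sub>R f i) = y" using u(3) by simp
  moreover have "\<forall>i\<in>I. 0 \<le> w i" using u(1) unfolding w_def by simp
  ultimately show ?thesis using that \<open>sum w I = 1\<close> by blast
qed

lemma subspace_vec_supported:
  fixes L :: "'a::euclidean_space set" and T :: "'b::finite set"
  assumes "subspace L"
  shows "subspace {w::'a^'b. (\<forall>b. w $ b \<in> L) \<and> (\<forall>b. b \<notin> T \<longrightarrow> w $ b = 0)}"
  using assms unfolding subspace_def by simp

lemma dim_vec_supported:
  fixes L :: "'a::euclidean_space set" and T :: "'b::finite set"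
  assumes L: "subspace L"
  shows "dim {w::'a^'b. (\<forall>b. w $ b \<in> L) \<and> (\<forall>b. b \<notin> T \<longrightarrow> w $ b = 0)} \<le> card T * dim L"
proof -
  obtain BL where BL: "independent BL" "L \<subseteq> span BL" "card BL = dim L"
    by (meson basis_exists)
  have finBL: "finite BL" using BL(1) by (simp add: independent_imp_finite)
  define Bs where "Bs = (\<Union>t\<in>T. axis t ` BL)"
  have "card Bs \<le> (\<Sum>t\<in>T. card (axis t ` BL))" unfolding Bs_def by (rule card_UN_le) simp
  also have "\<dots> \<le> (\<Sum>t\<in>T. dim L)"
    by (intro sum_mono) (simp add: card_image_le[OF finBL, unfolded BL(3)])
  finally
  have card_Bs: "card Bs \<le> card T * dim L" by simp
  have "w \<in> span Bs" if w: "\<forall>b. w $ b \<in> L" "\<forall>b. b \<notin> T \<longrightarrow> w $ b = 0" for w :: "'a^'b"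
  proof -
    have "axis t (w $ t) \<in> span Bs" if "t \<in> T" for t
    proof -
      have "axis t (w $ t) \<in> axis t ` span BL" using w BL(2) by blast
      also have "\<dots> = span (axis t ` BL)"
        by (rule span_linear_image[symmetric]) (simp add: linearI vec_eq_iff axis_def)
      also have "\<dots> \<subseteq> span Bs" unfolding Bs_def using that by (intro span_mono) blast
      finally show ?thesis .
    qed
    then have "(\<Sum>t\<in>T. axis t (w $ t)) \<in> span Bs" by (intro span_sum)
    moreover have "(\<Sum>t\<in>T. axis t (w $ t)) = w"
    proof (subst vec_eq_iff, intro allI)
      fix b
      have "(\<Sum>t\<in>T. axis t (w $ t)) $ b = (\<Sum>t\<in>T. if t = b then w $ t else 0)"
        by (simp add: sum_component axis_def eq_commute)
      also have "\<dots> = w $ b" using w(2) by (simp add: sum.delta)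
      finally show "(\<Sum>t\<in>T. axis t (w $ t)) $ b = w $ b" .
    qed
    ultimately show ?thesis by simp
  qed
  then have "{w::'a^'b. (\<forall>b. w $ b \<in> L) \<and> (\<forall>b. b \<notin> T \<longrightarrow> w $ b = 0)} \<subseteq> span Bs"
    by blast
  moreover have "finite Bs" unfolding Bs_def using finBL by simp
  ultimately have "dim {w::'a^'b. (\<forall>b. w $ b \<in> L) \<and> (\<forall>b. b \<notin> T \<longrightarrow> w $ b = 0)} \<le> card Bs"
    by (rule dim_le_card)
  with card_Bs show ?thesis by linarith
qed

text \<open>The coefficient vectors e(\<tau> 0), ..., e(\<tau> (r - 2)) and -(e(\<tau> 0) + ... + e(\<tau> (r - 2))):
  r vectors summing to zero, any r - 1 of which are linearly independent.\<close>

definition sarkaria_coeff :: "(nat \<Rightarrow> 'b) \<Rightarrow> nat \<Rightarrow> nat \<Rightarrow> 'b \<Rightarrow> real" where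
  "sarkaria_coeff \<tau> r j b =
     (if b \<in> \<tau> ` {..<r - 1} then (if j < r - 1 \<and> b = \<tau> j then 1 else 0) - (if j = r - 1 then 1 else 0)
      else 0)"

lemma sarkaria_coeff_at:
  assumes "inj_on \<tau> {..<r - 1}" "t < r - 1"
  shows "sarkaria_coeff \<tau> r j (\<tau> t) = (if j = t then 1 else 0) - (if j = r - 1 then 1 else 0)"
  using assms unfolding sarkaria_coeff_def inj_on_def by auto

lemma sum_sarkaria_coeff:
  assumes "inj_on \<tau> {..<r - 1}" "1 \<le> r"
  shows "(\<Sum>j<r. sarkaria_coeff \<tau> r j b) = 0"
proof (cases "b \<in> \<tau> ` {..<r - 1}")
  case True
  then obtain t where t: "t < r - 1" "b = \<tau> t" by auto
  then show ?thesis using assms by (simp add: sarkaria_coeff_at sum_subtractf)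
qed (simp add: sarkaria_coeff_def)

definition sarkaria_lift :: "(nat \<Rightarrow> 'b::finite) \<Rightarrow> nat \<Rightarrow> nat \<Rightarrow> 'a::real_vector \<Rightarrow> 'a^'b" where
  "sarkaria_lift \<tau> r j v = (\<chi> b. sarkaria_coeff \<tau> r j b *\<^sub>R v)"

lemma sarkaria_lift_in_supported:
  assumes "subspace L" "v \<in> L"
  shows "sarkaria_lift \<tau> r j v \<in> {w. (\<forall>b. w $ b \<in> L) \<and> (\<forall>b. b \<notin> \<tau> ` {..<r - 1} \<longrightarrow> w $ b = 0)}"
  using assms by (simp add: sarkaria_lift_def subspace_scale sarkaria_coeff_def)

lemma zero_in_convex_hull_sarkaria_lift:
  assumes "inj_on \<tau> {..<r - 1}" "1 \<le> r"
  shows "0 \<in> convex hull ((\<lambda>j. sarkaria_lift \<tau> r j v) ` {..<r})"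
proof -
  have "(\<Sum>j<r. (1 / real r) *\<^sub>R sarkaria_lift \<tau> r j v) = 0"
    using sum_sarkaria_coeff[OF assms] by (simp add: sarkaria_lift_def vec_eq_iff sum_component
        scaleR_sum_left[symmetric] sum_divide_distrib[symmetric])
  moreover have "(\<Sum>j<r. (1 / real r) *\<^sub>R sarkaria_lift \<tau> r j v) \<in> convex hull ((\<lambda>j. sarkaria_lift \<tau> r j v) ` {..<r})"
    using assms(2) by (intro convex_sum) (auto intro: hull_inc)
  ultimately show ?thesis by simp
qed

text \<open>Sarkaria's proof of Tverberg's theorem. The finite type 'b only provides, through the
  injection \<tau>, the r - 1 coordinates of the lifted space L^(r - 1).\<close>

lemma sarkaria_partition:
  fixes x :: "nat \<Rightarrow> 'a::euclidean_space" and \<tau> :: "nat \<Rightarrow> 'b::finite"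
  assumes L: "subspace L" "dim L \<le> m" and x: "\<And>a. a < N \<Longrightarrow> x a \<in> L"
    and N: "N = (r - 1) * m + 1" and r: "1 \<le> r" and \<tau>: "inj_on \<tau> {..<r - 1}"
  obtains g w where "\<forall>a<N. g a < r \<and> 0 \<le> w a" "sum w {..<N} = 1"
    "\<And>j. j < r \<Longrightarrow> (\<Sum>a\<in>{a\<in>{..<N}. g a = j}. w a *\<^sub>R x a) = (\<Sum>a\<in>{a\<in>{..<N}. g a = r - 1}. w a *\<^sub>R x a)"
proof -
  define M where "M = (r - 1) * m"
  have NM: "{..M} = {..<N}" unfolding N M_def by auto
  define z where "z a j = sarkaria_lift \<tau> r j (x a)" for a j
  define S where "S = {w::'a^'b. (\<forall>b. w $ b \<in> L) \<and> (\<forall>b. b \<notin> \<tau> ` {..<r - 1} \<longrightarrow> w $ b = 0)}"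
  have S: "subspace S" "dim S \<le> M"
  proof -
    show "subspace S" unfolding S_def by (rule subspace_vec_supported[OF L(1)])
    have "dim S \<le> card (\<tau> ` {..<r - 1}) * dim L" unfolding S_def by (rule dim_vec_supported[OF L(1)])
    also have "\<dots> \<le> M"
      unfolding M_def using card_image_le[of "{..<r - 1}" \<tau>] L(2) by (simp add: mult_mono)
    finally show "dim S \<le> M" .
  qed
  have colours: "finite (z a ` {..<r}) \<and> z a ` {..<r} \<subseteq> S \<and> 0 \<in> convex hull (z a ` {..<r})"
    if "a \<le> M" for a
  proof -
    have "x a \<in> L" using x that NM by auto
    then show ?thesis
      using sarkaria_lift_in_supported[OF L(1)] zero_in_convex_hull_sarkaria_lift[OF \<tau> r]
      unfolding S_def z_def by blast
  qed
  obtain f where f: "f \<in> PiE {..M} (\<lambda>a. z a ` {..<r})" and f0: "0 \<in> convex hull (f ` {..M})"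
    using colorful_caratheodory[OF S, of "\<lambda>a. z a ` {..<r}"] colours by blast
  obtain w where w: "\<forall>a\<in>{..M}. 0 \<le> w a" "sum w {..M} = 1" "(\<Sum>a\<in>{..M}. w a *\<^sub>R f a) = 0"
    using convex_hull_image_weights[OF _ f0] by blast
  have "\<forall>a\<in>{..M}. \<exists>j. j < r \<and> f a = z a j" using PiE_mem[OF f] by blast
  then obtain g where g: "\<forall>a\<in>{..M}. g a < r \<and> f a = z a (g a)" using bchoice by metis
  define V where "V j = (\<Sum>a\<in>{a\<in>{..<N}. g a = j}. w a *\<^sub>R x a)" for j
  have class_sum: "(\<Sum>a<N. if g a = j then w a *\<^sub>R x a else 0) = V j" for j
    unfolding V_def by (rule sum.inter_filter[symmetric]) simp
  have "V t = V (r - 1)" if t: "t < r - 1" for t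
  proof -
    have "0 = (\<Sum>a\<in>{..M}. w a *\<^sub>R f a) $ \<tau> t" using w(3) by simp
    also have "\<dots> = (\<Sum>a<N. (if g a = t then w a *\<^sub>R x a else 0) - (if g a = r - 1 then w a *\<^sub>R x a else 0))"
      unfolding NM[symmetric] sum_component using g
      by (intro sum.cong refl) (auto simp: z_def sarkaria_lift_def sarkaria_coeff_at[OF \<tau> t])
    also have "\<dots> = V t - V (r - 1)" by (simp add: sum_subtractf class_sum)
    finally show ?thesis by simp
  qed
  then have "V j = V (r - 1)" if "j < r" for j
    using that by (cases "j = r - 1") auto
  moreover have "\<forall>a<N. g a < r \<and> 0 \<le> w a" using g w(1) NM by auto
  moreover have "sum w {..<N} = 1" using w(2) NM by simp
  ultimately show ?thesis using that unfolding V_def by blast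
qed

lemma tverberg_in_hyperplane:
  fixes x :: "nat \<Rightarrow> 'a::euclidean_space" and \<tau> :: "nat \<Rightarrow> 'b::finite"
  assumes L: "subspace L" "dim L \<le> m" and x: "\<And>a. a < N \<Longrightarrow> x a \<in> L"
    and xc: "\<And>a. a < N \<Longrightarrow> x a \<bullet> c = 1"
    and N: "N = (r - 1) * m + 1" and r: "1 \<le> r" and \<tau>: "inj_on \<tau> {..<r - 1}"
  obtains g w e where "\<forall>a<N. g a < r \<and> 0 \<le> w a"
    "\<And>j. j < r \<Longrightarrow> (\<Sum>a\<in>{a\<in>{..<N}. g a = j}. w a) = 1 \<and> (\<Sum>a\<in>{a\<in>{..<N}. g a = j}. w a *\<^sub>R x a) = e"
proof -
  obtain g w where gw: "\<forall>a<N. g a < r \<and> 0 \<le> w a" and w1: "sum w {..<N} = 1"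
    and V: "\<And>j. j < r \<Longrightarrow> (\<Sum>a\<in>{a\<in>{..<N}. g a = j}. w a *\<^sub>R x a) = (\<Sum>a\<in>{a\<in>{..<N}. g a = r - 1}. w a *\<^sub>R x a)"
    using sarkaria_partition[where x = x, OF L x N r \<tau>] by blast
  define W where "W j = (\<Sum>a\<in>{a\<in>{..<N}. g a = j}. w a)" for j
  \<comment> \<open>the hyperplane turns the equal vector sums into equal weight sums\<close>
  have "W j = (\<Sum>a\<in>{a\<in>{..<N}. g a = j}. w a *\<^sub>R x a) \<bullet> c" for j
    unfolding W_def by (simp add: inner_sum_left xc)
  then have W: "W j = W (r - 1)" if "j < r" for j using V[OF that] by simp
  have "(\<Sum>j<r. W j) = sum w {..<N}"
    unfolding W_def using gw by (intro sum.group) auto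
  also have "(\<Sum>j<r. W j) = (\<Sum>j<r. W (r - 1))" by (rule sum.cong[OF refl]) (rule W, simp)
  finally have Wr: "W (r - 1) = 1 / r" using w1 r by (simp add: field_simps)
  show ?thesis
  proof (rule that[of g "\<lambda>a. r * w a" "r *\<^sub>R (\<Sum>a\<in>{a\<in>{..<N}. g a = r - 1}. w a *\<^sub>R x a)"])
    show "\<forall>a<N. g a < r \<and> 0 \<le> real r * w a" using gw by simp
    fix j assume j: "j < r"
    have "(\<Sum>a\<in>{a\<in>{..<N}. g a = j}. r * w a) = 1"
      using W[OF j] Wr r unfolding W_def by (simp add: sum_distrib_left[symmetric])
    moreover have "(\<Sum>a\<in>{a\<in>{..<N}. g a = j}. (r * w a) *\<^sub>R x a) = r *\<^sub>R (\<Sum>a\<in>{a\<in>{..<N}. g a = j}. w a *\<^sub>R x a)"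
      by (simp add: scaleR_sum_right)
    ultimately show "(\<Sum>a\<in>{a\<in>{..<N}. g a = j}. r * w a) = 1 \<and>
      (\<Sum>a\<in>{a\<in>{..<N}. g a = j}. (r * w a) *\<^sub>R x a) = r *\<^sub>R (\<Sum>a\<in>{a\<in>{..<N}. g a = r - 1}. w a *\<^sub>R x a)"
      using V[OF j] by simp
  qed
qed

lemma cinner_zero_left [simp]: "cinner_vec 0 x = 0"
  and cinner_zero_right [simp]: "cinner_vec x 0 = 0"
  unfolding cinner_vec_def by simp_all

lemma cinner_add_left: "cinner_vec (x + y) z = cinner_vec x z + cinner_vec y z"
  and cinner_add_right: "cinner_vec x (y + z) = cinner_vec x y + cinner_vec x z"
  and cinner_diff_left: "cinner_vec (x - y) z = cinner_vec x z - cinner_vec y z"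
  and cinner_diff_right: "cinner_vec x (y - z) = cinner_vec x y - cinner_vec x z"
  unfolding cinner_vec_def
  by (simp_all add: distrib_left distrib_right sum.distrib left_diff_distrib right_diff_distrib sum_subtractf)

lemma cinner_scale_left: "cinner_vec (c *s x) y = cnj c * cinner_vec x y"
  and cinner_scale_right: "cinner_vec x (c *s y) = c * cinner_vec x y"
  unfolding cinner_vec_def by (simp_all add: sum_distrib_left algebra_simps)

lemma scaleR_eq_cscale: "c *\<^sub>R (x::complex^'n) = complex_of_real c *s x"
  unfolding vec_eq_iff by (subst vector_scaleR_component) (simp add: scaleR_conv_of_real)

lemma cinner_scaleR_left: "cinner_vec (c *\<^sub>R x) y = of_real c * cinner_vec x y"
  and cinner_scaleR_right: "cinner_vec x (c *\<^sub>R y) = of_real c * cinner_vec x y"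
  by (simp_all add: scaleR_eq_cscale cinner_scale_left cinner_scale_right)

lemma cinner_sum_left: "finite A \<Longrightarrow> cinner_vec (sum f A) y = (\<Sum>a\<in>A. cinner_vec (f a) y)"
  and cinner_sum_right: "finite A \<Longrightarrow> cinner_vec x (sum f A) = (\<Sum>a\<in>A. cinner_vec x (f a))"
  by (induction A rule: finite_induct) (simp_all add: cinner_add_left cinner_add_right)

lemma cinner_commute: "cinner_vec y x = cnj (cinner_vec x y)"
  unfolding cinner_vec_def by (simp add: mult.commute)

text \<open>The real parts of cinner_vec x y and cinner_vec (\<i> x) y are real inner products on
  complex^'n viewed as a Euclidean space of dimension 2 CARD('n).\<close>

lemma cinner_eq_Complex: "cinner_vec x y = Complex (x \<bullet> y) ((\<i> *s x) \<bullet> y)"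
  unfolding cinner_vec_def inner_vec_def inner_complex_def
  by (simp add: complex_eq_iff Re_sum Im_sum)

lemma Re_cinner: "Re (cinner_vec x y) = x \<bullet> y"
  by (simp add: cinner_eq_Complex)

lemma cinner_eq_0_iff: "cinner_vec x y = 0 \<longleftrightarrow> x \<bullet> y = 0 \<and> (\<i> *s x) \<bullet> y = 0"
  by (simp add: cinner_eq_Complex Complex_eq_0)

lemma cinner_self: "cinner_vec x x = of_real (x \<bullet> x)"
proof -
  have "Im (cinner_vec x x) = 0" unfolding cinner_vec_def by (simp add: Im_sum algebra_simps)
  then show ?thesis using Re_cinner[of x x] by (simp add: complex_eq_iff)
qed

lemma cinner_self_eq_0 [simp]: "cinner_vec x x = 0 \<longleftrightarrow> x = 0"
  by (simp add: cinner_self)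

lemma self_adjoint_cinner:
  assumes "self_adjoint B"
  shows "cinner_vec x (B *v y) = cinner_vec (B *v x) y"
proof -
  have B: "cnj (B $ j $ i) = B $ i $ j" for i j
    using assms unfolding self_adjoint_def adjoint_mat_def by (metis vec_lambda_beta)
  have "cinner_vec x (B *v y) = (\<Sum>i\<in>UNIV. \<Sum>j\<in>UNIV. cnj (x $ i) * B $ i $ j * y $ j)"
    unfolding cinner_vec_def matrix_vector_mult_def by (simp add: sum_distrib_left mult.assoc)
  also have "\<dots> = (\<Sum>j\<in>UNIV. \<Sum>i\<in>UNIV. cnj (x $ i) * B $ i $ j * y $ j)" by (rule sum.swap)
  also have "\<dots> = (\<Sum>j\<in>UNIV. \<Sum>i\<in>UNIV. cnj (B $ j $ i * x $ i) * y $ j)"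
    by (intro sum.cong refl) (simp add: B mult.commute mult.left_commute)
  also have "\<dots> = cinner_vec (B *v x) y"
    unfolding cinner_vec_def matrix_vector_mult_def by (simp add: sum_distrib_right cnj_sum)
  finally show ?thesis .
qed

lemma self_adjoint_cinner_self_real:
  assumes "self_adjoint B"
  shows "cinner_vec x (B *v x) = of_real (Re (cinner_vec x (B *v x)))"
  using self_adjoint_cinner[OF assms, of x x] cinner_commute[of x "B *v x"]
  by (metis Reals_cnj_iff complex_is_Real_iff of_real_Re)

lemma csubspace_0: "csubspace C \<Longrightarrow> 0 \<in> C"
  and csubspace_add: "csubspace C \<Longrightarrow> x \<in> C \<Longrightarrow> y \<in> C \<Longrightarrow> x + y \<in> C"
  and csubspace_scale: "csubspace C \<Longrightarrow> x \<in> C \<Longrightarrow> c *s x \<in> C"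
  unfolding csubspace_def by auto

lemma csubspace_scaleR: "csubspace C \<Longrightarrow> x \<in> C \<Longrightarrow> c *\<^sub>R x \<in> C"
  by (simp add: scaleR_eq_cscale csubspace_scale)

lemma csubspace_diff: "csubspace C \<Longrightarrow> x \<in> C \<Longrightarrow> y \<in> C \<Longrightarrow> x - y \<in> C"
  using csubspace_add[of C x "(-1) *\<^sub>R y"] csubspace_scaleR[of C y "-1"] by simp

lemma csubspace_sum:
  assumes "csubspace C" "finite A" "\<And>a. a \<in> A \<Longrightarrow> f a \<in> C"
  shows "sum f A \<in> C"
  using assms(2,3) by (induction A rule: finite_induct) (auto intro: csubspace_add[OF assms(1)] csubspace_0[OF assms(1)])

lemma csubspace_imp_subspace: "csubspace C \<Longrightarrow> subspace C"
  unfolding subspace_def using csubspace_0 csubspace_add csubspace_scaleR by blast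

lemma csubspace_UNIV: "csubspace UNIV"
  and csubspace_zero: "csubspace {0}"
  unfolding csubspace_def by auto

text \<open>Inside a complex subspace, real orthogonality to C already means orthogonality for
  cinner_vec, because C is closed under multiplication by \<i>.\<close>

lemma csubspace_orthogonal_iff:
  assumes "csubspace C"
  shows "(\<forall>w\<in>C. orthogonal w v) \<longleftrightarrow> (\<forall>w\<in>C. cinner_vec w v = 0)"
  unfolding orthogonal_def cinner_eq_0_iff using csubspace_scale[OF assms, of _ \<i>] by auto

definition is_orth_proj :: "(complex^'n) set \<Rightarrow> complex^'n^'n \<Rightarrow> bool" where
  "is_orth_proj C P \<longleftrightarrow> (\<forall>v. P *v v \<in> C \<and> (\<forall>w\<in>C. cinner_vec w (v - P *v v) = 0))"

lemma orth_proj_def': "orth_proj C = (THE P. is_orth_proj C P)"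
  unfolding orth_proj_def is_orth_proj_def ..

lemma orthogonal_component_unique:
  assumes "csubspace C" "y \<in> C" "\<forall>w\<in>C. cinner_vec w (v - y) = 0"
    "y' \<in> C" "\<forall>w\<in>C. cinner_vec w (v - y') = 0"
  shows "y = y'"
proof -
  have "y - y' \<in> C" using assms by (simp add: csubspace_diff)
  have "cinner_vec (y - y') (y - y') = cinner_vec (y - y') (v - y') - cinner_vec (y - y') (v - y)"
    by (simp add: cinner_diff_right)
  also have "\<dots> = 0" using assms(3,5) \<open>y - y' \<in> C\<close> by simp
  finally show ?thesis by simp
qed

lemma orthogonal_component_exists:
  assumes "csubspace C"
  shows "\<exists>y. y \<in> C \<and> (\<forall>w\<in>C. cinner_vec w (v - y) = 0)"
proof -
  have span: "span C = C" using csubspace_imp_subspace[OF assms] by (simp add: span_eq_iff)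
  obtain y z where "y \<in> span C" "\<And>w. w \<in> span C \<Longrightarrow> orthogonal z w" "v = y + z"
    using orthogonal_subspace_decomp_exists[of C v] by blast
  then have "y \<in> C" "\<forall>w\<in>C. orthogonal w (v - y)"
    using span by (auto simp: orthogonal_commute)
  then show ?thesis using csubspace_orthogonal_iff[OF assms] by blast
qed

lemma ex_is_orth_proj:
  fixes C :: "(complex^'n) set"
  assumes C: "csubspace C"
  shows "\<exists>P. is_orth_proj C P"
proof -
  define pr where "pr v = (SOME y. y \<in> C \<and> (\<forall>w\<in>C. cinner_vec w (v - y) = 0))" for v
  have pr: "pr v \<in> C \<and> (\<forall>w\<in>C. cinner_vec w (v - pr v) = 0)" for v
    unfolding pr_def using someI_ex[OF orthogonal_component_exists[OF C, of v]] by blast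
  have "Vector_Spaces.linear (*s) (*s) pr"
  proof (unfold Vector_Spaces.linear_iff, intro conjI allI vec.vector_space_axioms)
    fix a b
    show "pr (a + b) = pr a + pr b"
      using pr[of a] pr[of b] pr[of "a + b"] C
      by (intro orthogonal_component_unique[OF C, where v = "a + b"])
         (auto intro: csubspace_add simp: cinner_diff_right cinner_add_right)
  next
    fix c a
    have "c *s a - c *s pr a = c *s (a - pr a)" by (simp add: vector_ssub_ldistrib)
    then show "pr (c *s a) = c *s pr a"
      using pr[of a] pr[of "c *s a"] C
      by (intro orthogonal_component_unique[OF C, where v = "c *s a"])
         (auto intro: csubspace_scale simp: cinner_scale_right simp del: vector_ssub_ldistrib)
  qed
  then have "matrix pr *v v = pr v" for v by (rule matrix_works)
  then show ?thesis unfolding is_orth_proj_def using pr by (intro exI[of _ "matrix pr"]) simp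
qed

lemma orth_proj_eqI:
  assumes "csubspace C" "is_orth_proj C P"
  shows "orth_proj C = P"
  unfolding orth_proj_def'
proof (rule the_equality)
  show "is_orth_proj C P" by (rule assms(2))
  fix P' assume P': "is_orth_proj C P'"
  show "P' = P"
  proof (subst matrix_eq, intro allI)
    fix v
    show "P' *v v = P *v v"
      using P' assms unfolding is_orth_proj_def
      by (intro orthogonal_component_unique[OF assms(1), of _ v]) blast+
  qed
qed

lemma is_orth_proj_orth_proj:
  assumes "csubspace C"
  shows "is_orth_proj C (orth_proj C)"
  using ex_is_orth_proj[OF assms] orth_proj_eqI[OF assms] by metis

lemma orth_proj_in: "csubspace C \<Longrightarrow> orth_proj C *v v \<in> C"
  and orth_proj_orthogonal: "csubspace C \<Longrightarrow> w \<in> C \<Longrightarrow> cinner_vec w (v - orth_proj C *v v) = 0"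
  using is_orth_proj_orth_proj unfolding is_orth_proj_def by blast+

lemma orth_proj_UNIV: "orth_proj UNIV = mat 1"
  by (rule orth_proj_eqI[OF csubspace_UNIV]) (simp add: is_orth_proj_def matrix_vector_mul_lid)

lemma orth_proj_zero: "orth_proj {0} = 0"
  by (rule orth_proj_eqI[OF csubspace_zero]) (simp add: is_orth_proj_def)

lemma orth_proj_unique:
  assumes "csubspace C" "y \<in> C" "\<forall>w\<in>C. cinner_vec w (v - y) = 0"
  shows "orth_proj C *v v = y"
  using orthogonal_component_unique[OF assms(1) orth_proj_in[OF assms(1)] _ assms(2,3)]
    orth_proj_orthogonal[OF assms(1)] by blast

lemma orth_proj_orthonormal_span:
  fixes v :: "nat \<Rightarrow> complex^'n"
  assumes on: "\<And>j l. j < r \<Longrightarrow> l < r \<Longrightarrow> cinner_vec (v j) (v l) = (if j = l then 1 else 0)"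
    and C: "C = {(\<Sum>j<r. c j *s v j) | c. True}"
  shows "csubspace C" "\<And>j. j < r \<Longrightarrow> v j \<in> C"
    "orth_proj C *v x = (\<Sum>j<r. cinner_vec (v j) x *s v j)"
proof -
  show Cs: "csubspace C" unfolding csubspace_def C
  proof (intro conjI ballI allI)
    show "0 \<in> {(\<Sum>j<r. c j *s v j) | c. True}" by (auto intro!: exI[of _ "\<lambda>_. 0"])
  next
    fix x y assume "x \<in> {(\<Sum>j<r. c j *s v j) | c. True}" "y \<in> {(\<Sum>j<r. c j *s v j) | c. True}"
    then obtain c1 c2 where "x = (\<Sum>j<r. c1 j *s v j)" "y = (\<Sum>j<r. c2 j *s v j)" by auto
    then have "x + y = (\<Sum>j<r. (c1 j + c2 j) *s v j)" by (simp add: sum.distrib vector_sadd_rdistrib)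
    then show "x + y \<in> {(\<Sum>j<r. c j *s v j) | c. True}" by (auto intro!: exI[of _ "\<lambda>j. c1 j + c2 j"])
  next
    fix a x assume "x \<in> {(\<Sum>j<r. c j *s v j) | c. True}"
    then obtain c where "x = (\<Sum>j<r. c j *s v j)" by auto
    then have "a *s x = (\<Sum>j<r. (a * c j) *s v j)"
      by (simp add: vec_eq_iff sum_component sum_distrib_left mult.assoc)
    then show "a *s x \<in> {(\<Sum>j<r. c j *s v j) | c. True}" by (auto intro!: exI[of _ "\<lambda>j. a * c j"])
  qed
  show "v j \<in> C" if "j < r" for j
  proof -
    have "(\<Sum>l<r. (if l = j then 1 else 0) *s v l) = (\<Sum>l<r. if l = j then v l else 0)"
      by (intro sum.cong) auto
    then have "v j = (\<Sum>l<r. (if l = j then 1 else 0) *s v l)" using that by simp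
    then show ?thesis unfolding C by (auto intro!: exI[of _ "\<lambda>l. if l = j then 1 else 0"])
  qed
  let ?y = "\<Sum>j<r. cinner_vec (v j) x *s v j"
  have "cinner_vec (v l) (x - ?y) = 0" if "l < r" for l
  proof -
    have "cinner_vec (v l) ?y = (\<Sum>j<r. cinner_vec (v j) x * cinner_vec (v l) (v j))"
      by (simp add: cinner_sum_right cinner_scale_right)
    also have "\<dots> = (\<Sum>j<r. if j = l then cinner_vec (v j) x else 0)"
      using that by (intro sum.cong refl) (simp add: on)
    finally show ?thesis using that by (simp add: cinner_diff_right)
  qed
  then have "\<forall>w\<in>C. cinner_vec w (x - ?y) = 0"
    unfolding C by (auto simp: cinner_sum_left cinner_scale_left)
  moreover have "?y \<in> C" unfolding C by (auto intro!: exI[of _ "\<lambda>j. cinner_vec (v j) x"])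
  ultimately show "orth_proj C *v x = ?y" by (rule orth_proj_unique[OF Cs, rotated])
qed

lemma orth_proj_add_orthogonal_complement:
  assumes W: "csubspace W" and C: "csubspace C" "C \<subseteq> W"
  defines "W' \<equiv> {x\<in>W. \<forall>y\<in>C. cinner_vec y x = 0}"
  shows "csubspace W'" "orth_proj W = orth_proj C + orth_proj W'"
proof -
  show W': "csubspace W'" unfolding csubspace_def W'_def
    using W by (auto intro: csubspace_0 csubspace_add csubspace_scale simp: cinner_add_right cinner_scale_right)
  have "orth_proj W *v v = (orth_proj C + orth_proj W') *v v" for v
  proof (rule orth_proj_unique[OF W])
    show "(orth_proj C + orth_proj W') *v v \<in> W"
      using orth_proj_in[OF C(1), of v] orth_proj_in[OF W', of v] C(2)
      unfolding matrix_vector_mult_add_rdistrib W'_def by (blast intro: csubspace_add[OF W])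
    show "\<forall>w\<in>W. cinner_vec w (v - (orth_proj C + orth_proj W') *v v) = 0"
    proof
      fix w assume "w \<in> W"
      let ?c = "orth_proj C *v w"
      have c: "?c \<in> C" by (rule orth_proj_in[OF C(1)])
      have d: "w - ?c \<in> W'"
        unfolding W'_def using \<open>w \<in> W\<close> c C(2) orth_proj_orthogonal[OF C(1)]
        by (auto intro: csubspace_diff[OF W])
      have "cinner_vec ?c (v - orth_proj C *v v) = 0" "cinner_vec ?c (orth_proj W' *v v) = 0"
        using orth_proj_orthogonal[OF C(1) c] orth_proj_in[OF W', of v] c unfolding W'_def by auto
      then have c_part: "cinner_vec ?c (v - (orth_proj C + orth_proj W') *v v) = 0"
        by (simp add: matrix_vector_mult_add_rdistrib cinner_diff_right cinner_add_right algebra_simps)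
      have "cinner_vec (orth_proj C *v v) (w - ?c) = 0"
        using d orth_proj_in[OF C(1)] unfolding W'_def by blast
      then have "cinner_vec (w - ?c) (orth_proj C *v v) = 0" by (subst cinner_commute) simp
      moreover have "cinner_vec (w - ?c) (v - orth_proj W' *v v) = 0"
        by (rule orth_proj_orthogonal[OF W' d])
      ultimately have "cinner_vec (w - ?c) (v - (orth_proj C + orth_proj W') *v v) = 0"
        by (simp add: matrix_vector_mult_add_rdistrib cinner_diff_right cinner_add_right algebra_simps)
      with c_part have "cinner_vec (?c + (w - ?c)) (v - (orth_proj C + orth_proj W') *v v) = 0"
        by (simp only: cinner_add_left) simp
      then show "cinner_vec w (v - (orth_proj C + orth_proj W') *v v) = 0" by simp
    qed
  qed
  then show "orth_proj W = orth_proj C + orth_proj W'" by (simp add: matrix_eq)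
qed

lemma dim_orthogonal_complement:
  assumes W: "csubspace W" and C: "csubspace C" "C \<subseteq> W"
  shows "dim {x\<in>W. \<forall>y\<in>C. cinner_vec y x = 0} + dim C = dim W"
proof -
  have "{x\<in>W. \<forall>y\<in>C. cinner_vec y x = 0} = {x\<in>W. \<forall>y\<in>C. orthogonal y x}"
    using csubspace_orthogonal_iff[OF C(1)] by blast
  then show ?thesis
    using dim_subspace_orthogonal_to_vectors[OF csubspace_imp_subspace[OF C(1)] csubspace_imp_subspace[OF W] C(2)]
    by simp
qed

lemma dim_le_dim_orthogonal_add_card:
  fixes W :: "'a::euclidean_space set"
  assumes W: "subspace W" and V: "finite V"
  shows "dim W \<le> dim {x\<in>W. \<forall>v\<in>V. v \<bullet> x = 0} + card V"
proof -
  define T where "T = {y. \<forall>x\<in>span V. x \<bullet> y = 0}"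
  have sT: "subspace T" unfolding T_def subspace_def by (auto simp: inner_add_right)
  have "dim {y \<in> UNIV. \<forall>x\<in>span V. orthogonal x y} + dim (span V) = dim (UNIV :: 'a set)"
    by (rule dim_subspace_orthogonal_to_vectors) auto
  then have dT: "dim T + dim (span V) = DIM('a)" unfolding T_def orthogonal_def by simp
  have "dim {x + y |x y. x \<in> W \<and> y \<in> T} + dim (W \<inter> T) = dim W + dim T"
    by (rule dim_sums_Int[OF W sT])
  moreover have "dim {x + y |x y. x \<in> W \<and> y \<in> T} \<le> DIM('a)" by (rule dim_subset_UNIV)
  moreover have "dim (span V) \<le> card V" using dim_le_card' V by simp
  moreover have "W \<inter> T \<subseteq> {x\<in>W. \<forall>v\<in>V. v \<bullet> x = 0}" unfolding T_def using span_base by blast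
  then have "dim (W \<inter> T) \<le> dim {x\<in>W. \<forall>v\<in>V. v \<bullet> x = 0}" by (rule dim_subset)
  ultimately show ?thesis using dT by linarith
qed

lemma ex_unit_vector_cinner_orthogonal:
  fixes W :: "(complex^'n) set"
  assumes W: "subspace W" and V: "finite V" "2 * card V < dim W"
  shows "\<exists>y\<in>W. cinner_vec y y = 1 \<and> (\<forall>v\<in>V. cinner_vec v y = 0)"
proof -
  define V2 where "V2 = V \<union> (\<lambda>v. \<i> *s v) ` V"
  have "card V2 \<le> 2 * card V"
    unfolding V2_def using card_Un_le[of V "(\<lambda>v. \<i> *s v) ` V"] card_image_le[OF V(1), of "\<lambda>v. \<i> *s v"]
    by linarith
  moreover have "dim W \<le> dim {x\<in>W. \<forall>v\<in>V2. v \<bullet> x = 0} + card V2"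
    unfolding V2_def using V(1) by (intro dim_le_dim_orthogonal_add_card[OF W]) simp
  ultimately have "dim {x\<in>W. \<forall>v\<in>V2. v \<bullet> x = 0} \<noteq> 0" using V(2) by linarith
  then obtain x where x: "x \<in> W" "x \<noteq> 0" "\<forall>v\<in>V2. v \<bullet> x = 0"
    using dim_eq_0[of "{x\<in>W. \<forall>v\<in>V2. v \<bullet> x = 0}"] by auto
  define y where "y = (1 / norm x) *\<^sub>R x"
  have "y \<in> W" unfolding y_def using x(1) by (rule subspace_scale[OF W])
  moreover have "cinner_vec y y = 1"
    unfolding y_def using x(2)
    by (simp add: cinner_self inner_commute power2_norm_eq_inner[symmetric] power2_eq_square)
  moreover have "\<forall>v\<in>V. cinner_vec v y = 0"
    using x(3) unfolding y_def V2_def by (simp add: cinner_scaleR_right cinner_eq_0_iff)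
  ultimately show ?thesis by blast
qed

lemma self_adjoint_cinner_eq_0:
  assumes "self_adjoint B" "cinner_vec (B *v x) y = 0"
  shows "cinner_vec x (B *v y) = 0" "cinner_vec y (B *v x) = 0"
  using assms self_adjoint_cinner[OF assms(1)] cinner_commute[of y "B *v x"] by simp_all

lemma ex_B_orthogonal_unit_vectors:
  fixes W :: "(complex^'n) set" and Bs :: "(complex^'n^'n) set"
  assumes W: "subspace W" and Bs: "finite Bs" "\<forall>B\<in>Bs. self_adjoint B"
    and dim: "2 * card Bs * (K - 1) < dim W"
  shows "\<exists>u. (\<forall>a<K. u a \<in> W \<and> cinner_vec (u a) (u a) = 1) \<and>
     (\<forall>a<K. \<forall>b<K. a \<noteq> b \<longrightarrow> (\<forall>B\<in>Bs. cinner_vec (u a) (B *v u b) = 0))"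
  using dim
proof (induction K)
  case 0
  then show ?case by auto
next
  case (Suc K)
  have "2 * card Bs * (K - 1) \<le> 2 * card Bs * K" by simp
  with Suc.prems obtain u where u: "\<forall>a<K. u a \<in> W \<and> cinner_vec (u a) (u a) = 1"
    and uB: "\<forall>a<K. \<forall>b<K. a \<noteq> b \<longrightarrow> (\<forall>B\<in>Bs. cinner_vec (u a) (B *v u b) = 0)"
    using Suc.IH by fastforce
  define V where "V = (\<lambda>(a, B). B *v u a) ` ({..<K} \<times> Bs)"
  have "card V \<le> K * card Bs"
    unfolding V_def using card_image_le[of "{..<K} \<times> Bs"] Bs(1) by (simp add: card_cartesian_product)
  then have "2 * card V < dim W" using Suc.prems by (simp add: algebra_simps)
  moreover have "finite V" unfolding V_def using Bs(1) by simp
  ultimately obtain y where y: "y \<in> W" "cinner_vec y y = 1" "\<forall>v\<in>V. cinner_vec v y = 0"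
    using ex_unit_vector_cinner_orthogonal[OF W] by blast
  have yB: "cinner_vec (u a) (B *v y) = 0" "cinner_vec y (B *v u a) = 0" if "a < K" "B \<in> Bs" for a B
    using self_adjoint_cinner_eq_0[of B "u a" y] y(3) Bs(2) that unfolding V_def by auto
  show ?case
  proof (intro exI[of _ "u(K := y)"] conjI allI impI ballI)
    fix a assume "a < Suc K"
    then show "(u(K := y)) a \<in> W" "cinner_vec ((u(K := y)) a) ((u(K := y)) a) = 1"
      using u y by auto
  next
    fix a b B assume "a < Suc K" "b < Suc K" "a \<noteq> b" "B \<in> Bs"
    then show "cinner_vec ((u(K := y)) a) (B *v (u(K := y)) b) = 0"
      using uB yB by (cases "a = K"; cases "b = K") auto
  qed
qed

lemma dim_ge_orthonormal:
  fixes v :: "nat \<Rightarrow> complex^'n"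
  assumes on: "\<And>j l. j < r \<Longrightarrow> l < r \<Longrightarrow> cinner_vec (v j) (v l) = (if j = l then 1 else 0)"
    and C: "csubspace C" "\<And>j. j < r \<Longrightarrow> v j \<in> C"
  shows "2 * r \<le> dim C"
proof -
  \<comment> \<open>v 0, ..., v (r-1), \<i> v 0, ..., \<i> v (r-1) are orthonormal for the real inner product\<close>
  define S where "S = v ` {..<r} \<union> (\<lambda>j. \<i> *s v j) ` {..<r}"
  have dots: "v j \<bullet> v l = (if j = l then 1 else 0)" "(\<i> *s v j) \<bullet> v l = 0"
    "(\<i> *s v j) \<bullet> (\<i> *s v l) = (if j = l then 1 else 0)" if "j < r" "l < r" for j l
    using on[OF that] by (simp_all add: Re_cinner[symmetric] cinner_scale_left cinner_scale_right)
  have "inj_on v {..<r}" "inj_on (\<lambda>j. \<i> *s v j) {..<r}"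
    unfolding inj_on_def using dots(1,3) by (metis lessThan_iff zero_neq_one)+
  moreover have "v ` {..<r} \<inter> (\<lambda>j. \<i> *s v j) ` {..<r} = {}"
    using dots(1,2) by auto (metis inner_commute zero_neq_one)
  ultimately have "card S = 2 * r"
    unfolding S_def by (simp add: card_Un_disjoint card_image)
  moreover have "independent S"
  proof (rule pairwise_orthogonal_independent)
    show "pairwise orthogonal S"
      unfolding pairwise_def orthogonal_def S_def using dots by (auto simp: inner_commute)
    show "0 \<notin> S" unfolding S_def using dots(1,3) by (auto, metis inner_zero_left zero_neq_one)+
  qed
  moreover have "S \<subseteq> C" unfolding S_def using C csubspace_scale by blast
  ultimately show ?thesis using independent_card_le_dim by metis
qed

lemma csubspace_nonzero_dim_ge_2:
  assumes "csubspace W" "x \<in> W" "x \<noteq> 0"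
  shows "2 \<le> dim W"
proof -
  let ?v = "\<lambda>_::nat. (1 / norm x) *\<^sub>R x"
  have "cinner_vec (?v 0) (?v 0) = 1"
    using assms(3) by (simp add: cinner_scaleR_left cinner_scaleR_right cinner_self
        power2_norm_eq_inner[symmetric] power2_eq_square)
  then show ?thesis
    using dim_ge_orthonormal[of 1 ?v W] assms(1,2) csubspace_scaleR by fastforce
qed

lemma scaleR_matrix_vector_mult:
  fixes A :: "'a::real_algebra_1^'n^'m"
  shows "(c *\<^sub>R A) *v x = c *\<^sub>R (A *v x)"
  by (simp add: vec_eq_iff matrix_vector_mult_def scaleR_sum_right)

lemma is_code_orthonormal_span:
  fixes E :: "(complex^'n^'n) set" and v :: "nat \<Rightarrow> complex^'n"
  assumes vv: "\<And>B j l. B \<in> E \<Longrightarrow> j < r \<Longrightarrow> l < r \<Longrightarrow>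
       cinner_vec (v j) (B *v v l) = (if j = l then of_real (\<epsilon> B) else 0)"
    and I: "mat 1 \<in> E" "\<epsilon> (mat 1) = 1"
    and C: "C = {(\<Sum>j<r. c j *s v j) | c. True}"
  shows "is_code E C"
proof -
  have on: "\<And>j l. j < r \<Longrightarrow> l < r \<Longrightarrow> cinner_vec (v j) (v l) = (if j = l then 1 else 0)"
    using vv[OF I(1)] I(2) by (simp add: matrix_vector_mul_lid)
  have Cs: "csubspace C" and P: "\<And>x. orth_proj C *v x = (\<Sum>j<r. cinner_vec (v j) x *s v j)"
    using orth_proj_orthonormal_span[OF on C] by auto
  have "orth_proj C ** A ** orth_proj C = \<epsilon> A *\<^sub>R orth_proj C" if A: "A \<in> E" for A
  proof (subst matrix_eq, intro allI)
    fix x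
    have "cinner_vec (v j) (A *v (orth_proj C *v x)) = of_real (\<epsilon> A) * cinner_vec (v j) x"
      if j: "j < r" for j
    proof -
      have "cinner_vec (v j) (A *v (orth_proj C *v x))
          = (\<Sum>l<r. cinner_vec (v l) x * cinner_vec (v j) (A *v v l))"
        unfolding P by (simp add: vec.sum vector_scalar_commute cinner_sum_right cinner_scale_right)
      also have "\<dots> = (\<Sum>l<r. if l = j then cinner_vec (v l) x * of_real (\<epsilon> A) else 0)"
        by (intro sum.cong refl) (simp add: vv[OF A j])
      finally show ?thesis using j by simp
    qed
    then have "(orth_proj C ** A ** orth_proj C) *v x = (\<Sum>j<r. (of_real (\<epsilon> A) * cinner_vec (v j) x) *s v j)"
      unfolding matrix_vector_mul_assoc[symmetric] matrix_mul_assoc P by simp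
    also have "\<dots> = (\<epsilon> A *\<^sub>R orth_proj C) *v x"
      unfolding P scaleR_matrix_vector_mult
      by (simp add: scaleR_eq_cscale vec_eq_iff sum_component sum_distrib_left mult.assoc)
    finally show "(orth_proj C ** A ** orth_proj C) *v x = (\<epsilon> A *\<^sub>R orth_proj C) *v x" .
  qed
  then show ?thesis unfolding is_code_def using Cs by blast
qed

lemma cinner_matrix_span_eq_0:
  fixes Bs :: "(complex^'n^'n) set"
  assumes "B \<in> span Bs" "\<And>B. B \<in> Bs \<Longrightarrow> cinner_vec x (B *v y) = 0"
  shows "cinner_vec x (B *v y) = 0"
proof (rule span_induct[OF assms(1)])
  show "subspace {B. cinner_vec x (B *v y) = 0}"
    unfolding subspace_def
    by (simp add: matrix_vector_mult_add_rdistrib cinner_add_right scaleR_matrix_vector_mult cinner_scaleR_right)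
qed (rule assms(2))

lemma cinner_weighted_sums:
  fixes u :: "nat \<Rightarrow> complex^'n"
  assumes fin: "finite A" "finite A'"
    and orth: "\<And>a b. a \<in> A \<Longrightarrow> b \<in> A' \<Longrightarrow> a \<noteq> b \<Longrightarrow> cinner_vec (u a) (B *v u b) = 0"
    and w: "\<And>a. a \<in> A \<Longrightarrow> 0 \<le> w a"
  shows "cinner_vec (\<Sum>a\<in>A. sqrt (w a) *\<^sub>R u a) (B *v (\<Sum>b\<in>A'. sqrt (w b) *\<^sub>R u b))
       = (\<Sum>a\<in>A \<inter> A'. of_real (w a) * cinner_vec (u a) (B *v u a))"
proof -
  have "B *v (\<Sum>b\<in>A'. sqrt (w b) *\<^sub>R u b) = (\<Sum>b\<in>A'. sqrt (w b) *\<^sub>R (B *v u b))"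
    by (simp add: vec.sum scaleR_eq_cscale vector_scalar_commute)
  then have "cinner_vec (\<Sum>a\<in>A. sqrt (w a) *\<^sub>R u a) (B *v (\<Sum>b\<in>A'. sqrt (w b) *\<^sub>R u b))
      = (\<Sum>a\<in>A. of_real (sqrt (w a)) * cinner_vec (u a) (\<Sum>b\<in>A'. sqrt (w b) *\<^sub>R (B *v u b)))"
    using fin by (simp add: cinner_sum_left cinner_scaleR_left)
  also have "\<dots> = (\<Sum>a\<in>A. \<Sum>b\<in>A'. of_real (sqrt (w a) * sqrt (w b)) * cinner_vec (u a) (B *v u b))"
    using fin by (simp add: cinner_sum_right cinner_scaleR_right sum_distrib_left mult.assoc)
  also have "\<dots> = (\<Sum>a\<in>A. \<Sum>b\<in>A'. if b = a then of_real (w a) * cinner_vec (u a) (B *v u a) else 0)"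
    using orth w by (intro sum.cong refl) (auto simp: real_sqrt_mult[symmetric])
  also have "\<dots> = (\<Sum>a\<in>A \<inter> A'. of_real (w a) * cinner_vec (u a) (B *v u a))"
    using fin by (simp add: sum.delta' sum.inter_filter Int_def)
  finally show ?thesis .
qed

definition outer_mat :: "complex^'n \<Rightarrow> complex^'n^'n" where
  "outer_mat u = (\<chi> i k. u $ i * cnj (u $ k))"

lemma inner_outer_mat: "outer_mat u \<bullet> B = Re (cinner_vec u (B *v u))"
proof -
  have "outer_mat u \<bullet> B = (\<Sum>i\<in>UNIV. \<Sum>k\<in>UNIV. Re (cnj (u $ i) * u $ k * B $ i $ k))"
    unfolding outer_mat_def inner_vec_def inner_complex_def by (simp add: algebra_simps)
  also have "\<dots> = Re (cinner_vec u (B *v u))"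
    unfolding cinner_vec_def matrix_vector_mult_def by (simp add: Re_sum sum_distrib_left algebra_simps)
  finally show ?thesis .
qed

lemma subspace_ex_inner_representative:
  fixes E :: "'a::euclidean_space set"
  assumes "subspace E"
  shows "\<exists>y\<in>E. \<forall>B\<in>E. y \<bullet> B = M \<bullet> B"
proof -
  have span: "span E = E" using assms by (simp add: span_eq_iff)
  obtain y z where "y \<in> span E" "\<And>w. w \<in> span E \<Longrightarrow> orthogonal z w" "M = y + z"
    using orthogonal_subspace_decomp_exists[of E M] by blast
  then show ?thesis unfolding span orthogonal_def by (auto simp: inner_add_left)
qed

lemma code_from_partition:
  fixes E :: "(complex^'n^'n) set" and u :: "nat \<Rightarrow> complex^'n"
  assumes I: "mat 1 \<in> E" and W: "csubspace W"
    and u: "\<And>a. a < N \<Longrightarrow> u a \<in> W \<and> cinner_vec (u a) (u a) = 1"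
    and uE: "\<And>a b B. a < N \<Longrightarrow> b < N \<Longrightarrow> a \<noteq> b \<Longrightarrow> B \<in> E \<Longrightarrow> cinner_vec (u a) (B *v u b) = 0"
    and x: "\<And>a B. a < N \<Longrightarrow> B \<in> E \<Longrightarrow> cinner_vec (u a) (B *v u a) = of_real (x a \<bullet> B)"
    and gw: "\<forall>a<N. g a < r \<and> 0 \<le> w a"
    and classes: "\<And>j. j < r \<Longrightarrow> (\<Sum>a\<in>{a\<in>{..<N}. g a = j}. w a) = 1 \<and>
                                (\<Sum>a\<in>{a\<in>{..<N}. g a = j}. w a *\<^sub>R x a) = e"
    and r: "1 \<le> r"
  shows "\<exists>C. is_code E C \<and> csubspace C \<and> C \<subseteq> W \<and> 2 * r \<le> dim C"
proof -
  define G where "G j = {a\<in>{..<N}. g a = j}" for j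
  have G: "sum w (G j) = 1" "(\<Sum>a\<in>G j. w a *\<^sub>R x a) = e" if "j < r" for j
    using classes[OF that] unfolding G_def by auto
  \<comment> \<open>one vector per class of the partition; the Tverberg point e makes all their quadratic forms equal\<close>
  define v where "v j = (\<Sum>a\<in>G j. sqrt (w a) *\<^sub>R u a)" for j
  have vv: "cinner_vec (v j) (B *v v l) = (if j = l then of_real (e \<bullet> B) else 0)"
    if B: "B \<in> E" and j: "j < r" and l: "l < r" for B j l
  proof -
    have "cinner_vec (v j) (B *v v l) = (\<Sum>a\<in>G j \<inter> G l. of_real (w a) * cinner_vec (u a) (B *v u a))"
      unfolding v_def using uE[OF _ _ _ B] gw by (intro cinner_weighted_sums) (auto simp: G_def)
    also have "\<dots> = (if j = l then of_real ((\<Sum>a\<in>G j. w a *\<^sub>R x a) \<bullet> B) else 0)"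
    proof (cases "j = l")
      case True
      then show ?thesis using x[OF _ B] by (simp add: G_def inner_sum_left)
    next
      case False
      then have "G j \<inter> G l = {}" unfolding G_def by auto
      then show ?thesis using False by simp
    qed
    finally show ?thesis using G(2)[OF j] by auto
  qed
  have "e \<bullet> mat 1 = (\<Sum>a\<in>G 0. w a *\<^sub>R x a) \<bullet> mat 1" using G r by simp
  also have "\<dots> = (\<Sum>a\<in>G 0. w a)"
    using x[OF _ I] u by (simp add: inner_sum_left G_def matrix_vector_mul_lid)
  finally have e1: "e \<bullet> mat 1 = 1" using G r by simp
  define C where "C = {(\<Sum>j<r. c j *s v j) | c. True}"
  have on: "\<And>j l. j < r \<Longrightarrow> l < r \<Longrightarrow> cinner_vec (v j) (v l) = (if j = l then 1 else 0)"
    using vv[OF I] e1 by (simp add: matrix_vector_mul_lid)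
  have C: "csubspace C" "\<And>j. j < r \<Longrightarrow> v j \<in> C"
    using orth_proj_orthonormal_span[OF on C_def] by auto
  have "is_code E C" using is_code_orthonormal_span[OF vv I(1) e1 C_def] by blast
  moreover have "C \<subseteq> W"
    using u unfolding C_def v_def G_def by (auto intro!: csubspace_sum[OF W] csubspace_scale[OF W] csubspace_scaleR[OF W])
  moreover have "2 * r \<le> dim C" using dim_ge_orthonormal[OF on C] .
  ultimately show ?thesis using C(1) by blast
qed

lemma quantum_graph_dim_ge_1:
  assumes "quantum_graph E"
  shows "1 \<le> dim E"
proof -
  have "(mat 1 :: complex^'n^'n) \<noteq> 0" by (simp add: mat_def vec_eq_iff)
  then have "\<not> E \<subseteq> {0}" using assms unfolding quantum_graph_def by blast
  then show ?thesis using dim_eq_0[of E] by linarith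
qed

lemma nat_ceiling_divide_bounds:
  fixes p q :: nat
  assumes "1 \<le> p" "1 \<le> q"
  shows "1 \<le> nat \<lceil>real p / real q\<rceil>" "nat \<lceil>real p / real q\<rceil> \<le> p"
    "(nat \<lceil>real p / real q\<rceil> - 1) * q < p"
proof -
  have pos: "0 < real p / real q" and le: "real p / real q \<le> real p"
    using assms by (simp_all add: divide_le_eq)
  then show "1 \<le> nat \<lceil>real p / real q\<rceil>" "nat \<lceil>real p / real q\<rceil> \<le> p" by linarith+
  have "real (nat \<lceil>real p / real q\<rceil> - 1) < real p / real q"
    using pos by (simp add: of_nat_diff) linarith
  then have "real ((nat \<lceil>real p / real q\<rceil> - 1) * q) < real p"
    using assms by (simp add: less_divide_eq)
  then show "(nat \<lceil>real p / real q\<rceil> - 1) * q < p" by linarith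
qed

lemma large_code_exists:
  fixes E :: "(complex^'n^'n) set" and W :: "(complex^'n) set"
  assumes qg: "quantum_graph E" and W: "csubspace W" and p: "1 \<le> p" "2 * p \<le> dim W"
  shows "\<exists>C. is_code E C \<and> csubspace C \<and> C \<subseteq> W \<and> 2 * nat \<lceil>real p / real ((dim E)^2)\<rceil> \<le> dim C"
proof -
  have sE: "subspace E" and sa: "\<forall>A\<in>E. self_adjoint A" and I: "mat 1 \<in> E"
    using qg unfolding quantum_graph_def by auto
  define m where "m = dim E"
  define r where "r = nat \<lceil>real p / real (m^2)\<rceil>"
  have "1 \<le> m^2" using quantum_graph_dim_ge_1[OF qg] unfolding m_def by simp
  from nat_ceiling_divide_bounds[OF p(1) this]
  have r: "1 \<le> r" "r \<le> p" "(r - 1) * m^2 < p" unfolding r_def by blast+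
  obtain Bs where Bs: "independent Bs" "E \<subseteq> span Bs" "card Bs = m" "Bs \<subseteq> E"
    unfolding m_def by (meson basis_exists)
  have finBs: "finite Bs" using Bs(1) by (simp add: independent_imp_finite)
  define N where "N = (r - 1) * m + 1"
  have "2 * card Bs * (N - 1) < dim W"
    using r(3) p(2) unfolding N_def Bs(3) by (simp add: power2_eq_square algebra_simps)
  then obtain u where u: "\<forall>a<N. u a \<in> W \<and> cinner_vec (u a) (u a) = 1"
    and uB: "\<forall>a<N. \<forall>b<N. a \<noteq> b \<longrightarrow> (\<forall>B\<in>Bs. cinner_vec (u a) (B *v u b) = 0)"
    using ex_B_orthogonal_unit_vectors[OF csubspace_imp_subspace[OF W] finBs] sa Bs(4) by blast
  have uE: "cinner_vec (u a) (B *v u b) = 0" if "a < N" "b < N" "a \<noteq> b" "B \<in> E" for a b B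
    using cinner_matrix_span_eq_0[of B Bs "u a" "u b"] that uB Bs(2) by blast
  \<comment> \<open>the real quadratic forms B \<mapsto> u a* B u a, represented inside E\<close>
  have "\<forall>a. \<exists>y\<in>E. \<forall>B\<in>E. y \<bullet> B = outer_mat (u a) \<bullet> B"
    using subspace_ex_inner_representative[OF sE] by blast
  then obtain x where x: "\<And>a. x a \<in> E" "\<And>a B. B \<in> E \<Longrightarrow> x a \<bullet> B = outer_mat (u a) \<bullet> B"
    by metis
  have xB: "cinner_vec (u a) (B *v u a) = of_real (x a \<bullet> B)" if "B \<in> E" for a B
    using x(2)[OF that] self_adjoint_cinner_self_real[of B "u a"] sa that by (simp add: inner_outer_mat)
  have "x a \<bullet> mat 1 = 1" if "a < N" for a
    using xB[OF I, of a] u that by (simp add: matrix_vector_mul_lid)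
  moreover
  have "DIM(complex^'n) = 2 * CARD('n)" by simp
  then have "r - 1 < CARD('n)" using r(1,2) p dim_subset_UNIV[of W] by linarith
  then obtain \<tau> :: "nat \<Rightarrow> 'n" where \<tau>: "inj_on \<tau> {..<r - 1}"
    using card_le_inj[of "{..<r - 1}" "UNIV :: 'n set"] by auto
  ultimately obtain g w e where gw: "\<forall>a<N. g a < r \<and> 0 \<le> w a"
    and classes: "\<And>j. j < r \<Longrightarrow> (\<Sum>a\<in>{a\<in>{..<N}. g a = j}. w a) = 1 \<and> (\<Sum>a\<in>{a\<in>{..<N}. g a = j}. w a *\<^sub>R x a) = e"
    using tverberg_in_hyperplane[OF sE _ _ _ N_def r(1) \<tau>, of x "mat 1"] x(1) unfolding m_def by blast
  show ?thesis
    using code_from_partition[OF I W _ uE xB gw classes r(1)] u unfolding r_def m_def by blast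
qed

declare slog.simps [simp del]

lemma slog_step: "1 \<le> p \<Longrightarrow> 1 \<le> q \<Longrightarrow> slog p q = slog (p - nat \<lceil>real p / real q\<rceil>) q + 1"
  by (subst slog.simps) simp

lemma slog_0 [simp]: "slog 0 q = 0"
  by (subst slog.simps) simp

lemma diff_nat_ceiling_divide_mono:
  fixes p p' q :: nat
  assumes "p' \<le> p" "1 \<le> q"
  shows "p' - nat \<lceil>real p' / real q\<rceil> \<le> p - nat \<lceil>real p / real q\<rceil>"
proof -
  have "real (p - p') / real q \<le> real (p - p')"
    using assms(2) by (simp add: divide_le_eq mult_le_cancel_left1)
  then have "real p / real q \<le> real p' / real q + real (p - p')"
    using assms(1) by (simp add: of_nat_diff diff_divide_distrib)
  then have "\<lceil>real p / real q\<rceil> \<le> \<lceil>real p' / real q\<rceil> + int (p - p')"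
    by (metis ceiling_add_of_int ceiling_mono of_int_of_nat_eq)
  moreover have "\<lceil>real p' / real q\<rceil> \<le> int p'" "0 \<le> \<lceil>real p / real q\<rceil>"
    using assms by (simp_all add: ceiling_le_iff divide_le_eq mult_le_cancel_left1 order.strict_trans2[OF _ divide_nonneg_nonneg])
  ultimately show ?thesis using assms(1) by linarith
qed

lemma slog_mono:
  assumes "1 \<le> q" "p' \<le> p"
  shows "slog p' q \<le> slog p q"
  using assms(2)
proof (induction p arbitrary: p' rule: less_induct)
  case (less p)
  show ?case
  proof (cases "p' = 0")
    case False
    then have "1 \<le> p'" "1 \<le> p" using less.prems by auto
    moreover have "p - nat \<lceil>real p / real q\<rceil> < p"
      using nat_ceiling_divide_bounds(1)[OF \<open>1 \<le> p\<close> assms(1)] \<open>1 \<le> p\<close> by linarith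
    ultimately have "slog (p' - nat \<lceil>real p' / real q\<rceil>) q \<le> slog (p - nat \<lceil>real p / real q\<rceil>) q"
      using less.IH diff_nat_ceiling_divide_mono[OF less.prems assms(1)] by blast
    then show ?thesis using slog_step[OF \<open>1 \<le> p'\<close> assms(1)] slog_step[OF \<open>1 \<le> p\<close> assms(1)] by simp
  qed simp
qed

lemma coloring_of_csubspace:
  fixes E :: "(complex^'n^'n) set"
  assumes qg: "quantum_graph E" and W: "csubspace W" and p: "dim W div 2 = p"
  shows "\<exists>K. finite K \<and> (\<forall>C\<in>K. is_code E C \<and> C \<subseteq> W) \<and>
      (\<Sum>C\<in>K. orth_proj C) = orth_proj W \<and> card K \<le> slog p ((dim E)^2)"
  using W p
proof (induction p arbitrary: W rule: less_induct)
  case (less p W)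
  define q where "q = (dim E)^2"
  have q: "1 \<le> q" using quantum_graph_dim_ge_1[OF qg] unfolding q_def by simp
  show ?case
  proof (cases "W \<subseteq> {0}")
    case True
    then have "W = {0}" using csubspace_0[OF less.prems(1)] by auto
    then show ?thesis by (intro exI[of _ "{}"]) (simp add: orth_proj_zero)
  next
    case False
    then obtain x where "x \<in> W" "x \<noteq> 0" by auto
    then have "2 \<le> dim W" by (rule csubspace_nonzero_dim_ge_2[OF less.prems(1)])
    then have p: "1 \<le> p" "2 * p \<le> dim W" using less.prems(2) by linarith+
    define c where "c = nat \<lceil>real p / real q\<rceil>"
    have c: "1 \<le> c" unfolding c_def using nat_ceiling_divide_bounds(1)[OF p(1) q] .
    obtain C where C: "is_code E C" "csubspace C" "C \<subseteq> W" "2 * c \<le> dim C"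
      using large_code_exists[OF qg less.prems(1) p] unfolding c_def q_def by blast
    define W' where "W' = {x\<in>W. \<forall>y\<in>C. cinner_vec y x = 0}"
    have W': "csubspace W'" "orth_proj W = orth_proj C + orth_proj W'"
      using orth_proj_add_orthogonal_complement[OF less.prems(1) C(2,3)] unfolding W'_def by auto
    have "dim W' + dim C = dim W"
      unfolding W'_def by (rule dim_orthogonal_complement[OF less.prems(1) C(2,3)])
    then have p': "dim W' div 2 \<le> p - c" "dim W' div 2 < p" using C(4) less.prems(2) c p by linarith+
    obtain K where K: "finite K" "\<forall>D\<in>K. is_code E D \<and> D \<subseteq> W'"
      "(\<Sum>D\<in>K. orth_proj D) = orth_proj W'" "card K \<le> slog (dim W' div 2) q"
      using less.IH[OF p'(2) W'(1) refl] unfolding q_def by blast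
    have "C \<notin> K"
    proof
      assume "C \<in> K"
      then have "C \<subseteq> W'" using K(2) by blast
      then have "\<forall>y\<in>C. cinner_vec y y = 0" unfolding W'_def by blast
      then have "C \<subseteq> {0}" by auto
      then have "dim C = 0" by (simp add: dim_eq_0)
      with C(4) c show False by linarith
    qed
    have "card (insert C K) = card K + 1" using \<open>C \<notin> K\<close> K(1) by simp
    also have "\<dots> \<le> slog (p - c) q + 1" using K(4) slog_mono[OF q p'(1)] by simp
    also have "\<dots> = slog p q" unfolding c_def using slog_step[OF p(1) q] by simp
    finally have "card (insert C K) \<le> slog p q" .
    moreover have "(\<Sum>D\<in>insert C K. orth_proj D) = orth_proj W"
      using \<open>C \<notin> K\<close> K(1,3) W'(2) by simp
    moreover have "\<forall>D\<in>insert C K. is_code E D \<and> D \<subseteq> W"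
      using C K(2) unfolding W'_def by blast
    moreover have "finite (insert C K)" using K(1) by simp
    ultimately show ?thesis unfolding q_def[symmetric] by (intro exI[of _ "insert C K"] conjI)
  qed
qed

theorem proposition4:
  fixes E :: "(complex^'n^'n) set"
  assumes "quantum_graph E"
  shows "\<exists>K. is_coloring E K \<and> card K \<le> slog CARD('n) (nat ((qnorm E + 1)^2))"
proof -
  have "dim (UNIV :: (complex^'n) set) div 2 = CARD('n)" by simp
  from coloring_of_csubspace[OF assms csubspace_UNIV this]
  obtain K where K: "finite K" "\<forall>C\<in>K. is_code E C"
    "(\<Sum>C\<in>K. orth_proj C) = orth_proj UNIV" "card K \<le> slog CARD('n) ((dim E)^2)"
    by blast
  have "is_coloring E K" unfolding is_coloring_def using K(1-3) by (simp add: orth_proj_UNIV)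
  moreover have "nat ((qnorm E + 1)^2) = (dim E)^2" unfolding qnorm_def by (simp add: nat_power_eq)
  ultimately show ?thesis using K(4) by auto
qed

end
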